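(* Let $\mathcal{C}$ be a closed convex set with $\overline\Pi=\mathcal{C}\cap\Pi$ closed and convex, let $S=(x_1,\dots,x_m)$ be i.i.d. from $\mathcal{D}_{\mathcal{X}}$ with empirical distribution $\widehat{\mathcal{D}}_{\mathcal{X}}$, let $\mathcal{F}=\{x\mapsto\mathsf{B}_F(\pi(x)\parallel\pi_0(x)):\pi\in\overline\Pi\}\cup\{x\mapsto\mathsf{B}_F(\pi'(x)\parallel\pi(x)):\pi,\pi'\in\overline\Pi\}$ and $\epsilon_m=\sup_{f\in\mathcal{F}}|\mathbb{E}_{\mathcal{D}_{\mathcal{X}}}[f]-\mathbb{E}_{\widehat{\mathcal{D}}_{\mathcal{X}}}[f]|$. Let $\widehat\pi$ minimize $\mathbb{E}_{\mathcal{D}_{\mathcal{X}}}[\mathsf{B}_F(\pi(x)\parallel\pi_0(x))]$ and $\widehat\pi_S$ minimize $\mathbb{E}_{\widehat{\mathcal{D}}_{\mathcal{X}}}[\mathsf{B}_F(\pi(x)\parallel\pi_0(x))]$ over $\pi\in\overline\Pi$, and assume $\pi^*\in\overline\Pi$. Then, with $\mathbb{E}$ denoting $\mathbb{E}_{x\sim\mathcal{D}_{\mathcal{X}}}$: (1) $\mathbb{E}[\mathsf{B}_F(\widehat\pi(x)\parallel\pi_0(x))]\le\mathbb{E}[\mathsf{B}_F(\widehat\pi_S(x)\parallel\pi_0(x))]\le\mathbb{E}[\mathsf{B}_F(\widehat\pi(x)\parallel\pi_0(x))]+2\epsilon_m$; (2) $\mathrm{Improv}(\widehat\pi_S)\g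e\mathbb{E}[\mathsf{B}_F(\widehat\pi(x)\parallel\pi_0(x))]-\mathbb{E}[\mathsf{B}_F(\pi^*(x)\parallel\widehat\pi(x))]-6\epsilon_m$.
   Context: $\mathcal{X},\mathcal{Y}$ finite; models are maps $\pi\colon\mathcal{X}\to\Delta(\mathcal{Y})$; $\Pi\subseteq\Delta(\mathcal{Y})^{\mathcal{X}}$ closed and convex; $\pi_0$ a baseline model; $\pi^*$ a reference model; $\mathcal{D}_{\mathcal{X}}$ a full-support distribution on $\mathcal{X}$. $F$ is convex and differentiable on the interior of its domain (containing $\Delta(\mathcal{Y})$), $\mathsf{B}_F(p\parallel q)=F(p)-F(q)-\langle\nabla F(q),p-q\rangle$. The improvement of a model $\pi$ is $\mathrm{Improv}(\pi)=\mathbb{E}[\mathsf{B}_F(\pi^*(x)\parallel\pi_0(x))]-\mathbb{E}[\mathsf{B}_F(\pi^*(x)\parallel\pi(x))]$. *)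

theory Defs
  imports "HOL-Probability.Probability"
begin

definition prob_simplex :: "(real ^ 'y) set" where
  "prob_simplex = {p. (\<forall>i. 0 \<le> p $ i) \<and> (\<Sum>i\<in>UNIV. p $ i) = 1}"

definition models :: "(real ^ 'y ^ 'x) set" where
  "models = {\<pi>. \<forall>x. \<pi> $ x \<in> prob_simplex}"

definition bregman :: "(real ^ 'y \<Rightarrow> real) \<Rightarrow> (real ^ 'y \<Rightarrow> real ^ 'y)
    \<Rightarrow> real ^ 'y \<Rightarrow> real ^ 'y \<Rightarrow> real" where
  "bregman F gradF p q = F p - F q - gradF q \<bullet> (p - q)"

definition Ex :: "'x pmf \<Rightarrow> ('x \<Rightarrow> real) \<Rightarrow> real" where
  "Ex D f = measure_pmf.expectation D f"

definition Improv :: "(real ^ 'y \<Rightarrow> real) \<Rightarrow> (real ^ 'y \<Rightarrow> real ^ 'y) \<Rightarrow> 'x pmf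
    \<Rightarrow> real ^ 'y ^ 'x \<Rightarrow> real ^ 'y ^ 'x \<Rightarrow> real ^ 'y ^ 'x \<Rightarrow> real" where
  "Improv F gradF D pistar pi0 \<pi> =
     Ex D (\<lambda>x. bregman F gradF (pistar $ x) (pi0 $ x))
   - Ex D (\<lambda>x. bregman F gradF (pistar $ x) (\<pi> $ x))"

definition Fclass :: "(real ^ 'y \<Rightarrow> real) \<Rightarrow> (real ^ 'y \<Rightarrow> real ^ 'y)
    \<Rightarrow> real ^ 'y ^ 'x \<Rightarrow> (real ^ 'y ^ 'x) set \<Rightarrow> ('x \<Rightarrow> real) set" where
  "Fclass F gradF pi0 P =
     {(\<lambda>x. bregman F gradF (\<pi> $ x) (pi0 $ x)) | \<pi>. \<pi> \<in> P}
   \<union> {(\<lambda>x. bregman F gradF (\<pi>' $ x) (\<pi> $ x)) | \<pi> \<pi>'. \<pi> \<in> P \<and> \<pi>' \<in> P}"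

definition eps_dev :: "'x pmf \<Rightarrow> 'x pmf \<Rightarrow> ('x \<Rightarrow> real) set \<Rightarrow> real" where
  "eps_dev D Dhat FF = (SUP f\<in>FF. \<bar>Ex D f - Ex Dhat f\<bar>)"

end

theory Submission
  imports Defs
begin

text \<open>
  A Bregman divergence satisfies the three-point identity
  \<open>B(r \<parallel> q) = B(r \<parallel> p) + B(p \<parallel> q) + \<langle>\<nabla>F p - \<nabla>F q, r - p\<rangle>\<close>,
  whose last term is the derivative of \<open>B(\<cdot> \<parallel> q)\<close> at \<open>p\<close> in direction \<open>r - p\<close>.
  If \<open>p\<close> minimises the expected divergence from \<open>q\<close> over a convex set containing
  \<open>r\<close>, the expected derivative is nonnegative; this is the Pythagorean inequality
  for the empirical minimiser.  Together with the minimality of both minimisers,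
  each passage between \<open>\<D>\<^sub>\<X>\<close> and the empirical distribution costs \<open>\<epsilon>\<^sub>m\<close>, which
  gives both claims.  For \<open>\<epsilon>\<^sub>m\<close> to bound these passages at all, the real
  supremum must be taken over a set bounded above: the divergences are bounded on
  the compact simplex, since a convex differentiable function has bounded gradient
  on compact subsets of its open domain.
\<close>

lemma Ex_finite_sum: "Ex D f = (\<Sum>x\<in>UNIV. pmf D x * f (x::'x::finite))"
  unfolding Ex_def by (subst integral_measure_pmf[where A=UNIV]) auto

lemma Ex_add: "Ex D (\<lambda>x::'x::finite. f x + g x) = Ex D f + Ex D g"
  unfolding Ex_finite_sum by (simp add: distrib_left sum.distrib)

lemma Ex_nonneg: "(\<And>x. 0 \<le> f x) \<Longrightarrow> 0 \<le> Ex D f"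
  unfolding Ex_def by simp

lemma Ex_abs_le:
  fixes f :: "'x::finite \<Rightarrow> real"
  assumes "\<And>x. \<bar>f x\<bar> \<le> B"
  shows "\<bar>Ex D f\<bar> \<le> B"
proof -
  have "\<bar>Ex D f\<bar> \<le> (\<Sum>x\<in>UNIV. pmf D x * \<bar>f x\<bar>)"
    unfolding Ex_finite_sum by (rule order.trans[OF sum_abs]) (simp add: abs_mult)
  also have "\<dots> \<le> (\<Sum>x\<in>UNIV. pmf D x * B)"
    by (intro sum_mono mult_left_mono assms) simp
  also have "\<dots> = B"
    by (simp add: sum_distrib_right[symmetric] sum_pmf_eq_1)
  finally show ?thesis .
qed

lemma Ex_has_real_derivative:
  fixes g :: "'x::finite \<Rightarrow> real \<Rightarrow> real"
  assumes "\<And>x. (g x has_real_derivative g' x) (at t)"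
  shows "((\<lambda>t. Ex D (\<lambda>x. g x t)) has_real_derivative Ex D g') (at t)"
  unfolding Ex_finite_sum by (intro DERIV_sum DERIV_cmult assms)

lemma has_real_derivative_nonneg_at_right_min:
  fixes g :: "real \<Rightarrow> real"
  assumes "(g has_real_derivative l) (at 0)" and "\<And>t. 0 < t \<Longrightarrow> t \<le> 1 \<Longrightarrow> g 0 \<le> g t"
  shows "0 \<le> l"
proof (rule ccontr)
  assume "\<not> 0 \<le> l"
  then obtain d where "d > 0" and d: "\<And>h. 0 < h \<Longrightarrow> h < d \<Longrightarrow> g (0 + h) < g 0"
    using DERIV_neg_dec_right[OF assms(1)] by force
  then have "g (min (d/2) 1) < g 0" by simp
  moreover have "g 0 \<le> g (min (d/2) 1)"
    using assms(2) \<open>d > 0\<close> by simp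
  ultimately show False by simp
qed

lemma has_real_derivative_along_segment:
  assumes "(F has_derivative (\<lambda>h. g \<bullet> h)) (at p)"
  shows "((\<lambda>t. F ((1 - t) *\<^sub>R p + t *\<^sub>R r)) has_real_derivative g \<bullet> (r - p)) (at 0)"
proof -
  have "((\<lambda>t::real. p + t *\<^sub>R (r - p)) has_derivative (\<lambda>h. h *\<^sub>R (r - p))) (at 0)"
    by (auto intro!: derivative_eq_intros)
  moreover have "(F has_derivative (\<lambda>h. g \<bullet> h)) (at ((\<lambda>t::real. p + t *\<^sub>R (r - p)) 0))"
    using assms by simp
  ultimately have "((\<lambda>t. F (p + t *\<^sub>R (r - p))) has_derivative (\<lambda>h. (g \<bullet> (r - p)) * h)) (at 0)"
    by (rule has_derivative_compose[THEN has_derivative_eq_rhs]) (simp add: fun_eq_iff)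
  moreover have "(\<lambda>t. F ((1 - t) *\<^sub>R p + t *\<^sub>R r)) = (\<lambda>t. F (p + t *\<^sub>R (r - p)))"
    by (simp add: algebra_simps)
  ultimately show ?thesis
    by (simp add: has_field_derivative_def)
qed

lemma convex_on_above_tangent:
  assumes "convex_on U F" and "(F has_derivative (\<lambda>h. g \<bullet> h)) (at p)"
    and "p \<in> U" and "r \<in> U"
  shows "F p + g \<bullet> (r - p) \<le> F r"
proof -
  let ?chord_gap = "\<lambda>t. ((1 - t) * F p + t * F r) - F ((1 - t) *\<^sub>R p + t *\<^sub>R r)"
  have "(?chord_gap has_real_derivative (F r - F p) - g \<bullet> (r - p)) (at 0)"
    using has_real_derivative_along_segment[OF assms(2)]
    by (auto intro!: derivative_eq_intros)
  moreover have "?chord_gap 0 \<le> ?chord_gap t" if "0 < t" "t \<le> 1" for t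
    using convex_onD[OF assms(1), of t p r] that assms(3,4) by simp
  ultimately have "0 \<le> (F r - F p) - g \<bullet> (r - p)"
    by (rule has_real_derivative_nonneg_at_right_min)
  then show ?thesis by simp
qed

lemma bregman_nonneg:
  assumes "convex_on U F" and "(F has_derivative (\<lambda>h. gradF q \<bullet> h)) (at q)"
    and "p \<in> U" and "q \<in> U"
  shows "0 \<le> bregman F gradF p q"
  using convex_on_above_tangent[OF assms(1,2,4,3)] by (simp add: bregman_def)

lemma bregman_three_point:
  "bregman F gradF r q
     = bregman F gradF r p + bregman F gradF p q + (gradF p - gradF q) \<bullet> (r - p)"
  by (simp add: bregman_def inner_diff_left inner_diff_right)

lemma bregman_along_segment_has_real_derivative:
  assumes "(F has_derivative (\<lambda>h. gradF p \<bullet> h)) (at p)"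
  shows "((\<lambda>t. bregman F gradF ((1 - t) *\<^sub>R p + t *\<^sub>R r) q)
           has_real_derivative (gradF p - gradF q) \<bullet> (r - p)) (at 0)"
proof -
  have "gradF q \<bullet> ((1 - t) *\<^sub>R p + t *\<^sub>R r - q) = gradF q \<bullet> (p - q) + t * (gradF q \<bullet> (r - p))"
    for t
    by (simp add: algebra_simps inner_diff_right inner_add_right)
  then show ?thesis
    unfolding bregman_def
    using has_real_derivative_along_segment[OF assms, of r]
    by (auto intro!: derivative_eq_intros simp: inner_diff_left)
qed

lemma convex_gradient_bounded_on_compact:
  fixes F :: "'a::euclidean_space \<Rightarrow> real"
  assumes "open U" and "compact K" and "K \<subseteq> U" and "convex_on U F"
    and F_grad: "\<And>q. q \<in> U \<Longrightarrow> (F has_derivative (\<lambda>h. gradF q \<bullet> h)) (at q)"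
  obtains G where "\<And>q. q \<in> K \<Longrightarrow> norm (gradF q) \<le> G"
proof -
  obtain e where "e > 0" and e: "(\<Union>x\<in>K. cball x e) \<subseteq> U"
    using compact_subset_open_imp_cball_epsilon_subset assms(1-3) by metis
  define K' where "K' = {x + y | x y. x \<in> K \<and> y \<in> cball 0 e}"
  have "compact K'"
    unfolding K'_def by (intro compact_sums assms(2) compact_cball)
  have K'_ball: "q + v \<in> K'" if "q \<in> K" "norm v \<le> e" for q v
    unfolding K'_def using that by force
  have "K' \<subseteq> U"
    using e by (force simp: K'_def dist_norm)
  then have "continuous_on K' F"
    using F_grad has_derivative_continuous by (blast intro: continuous_at_imp_continuous_on)
  then obtain M where M: "\<And>y. y \<in> K' \<Longrightarrow> \<bar>F y\<bar> \<le> M"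
    using continuous_on_compact_bound[OF \<open>compact K'\<close>] by (metis real_norm_def)
  show thesis
  proof (rule that)
    fix q assume "q \<in> K"
    define g where "g = gradF q"
    \<comment> \<open>The tangent inequality towards the point at distance \<open>e\<close> in direction \<open>g\<close>.\<close>
    define v where "v = (e / norm g) *\<^sub>R g"
    have "norm v \<le> e"
      using \<open>e > 0\<close> by (simp add: v_def)
    then have "q + v \<in> K'"
      by (rule K'_ball[OF \<open>q \<in> K\<close>])
    have "q \<in> K'"
      using K'_ball[OF \<open>q \<in> K\<close>, of 0] \<open>e > 0\<close> by simp
    have "F q + g \<bullet> v \<le> F (q + v)"
      using convex_on_above_tangent[OF assms(4) F_grad, of q "q + v"] \<open>q + v \<in> K'\<close> \<open>q \<in> K'\<close>
        \<open>K' \<subseteq> U\<close> by (auto simp: g_def)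
    moreover have "g \<bullet> v = e * norm g"
      by (simp add: v_def power2_norm_eq_inner[symmetric] power2_eq_square)
    ultimately have "e * norm g \<le> 2 * M"
      using M[OF \<open>q + v \<in> K'\<close>] M[OF \<open>q \<in> K'\<close>] by linarith
    then show "norm (gradF q) \<le> 2 * M / e"
      using \<open>e > 0\<close> by (simp add: g_def field_simps)
  qed
qed

lemma bregman_bounded_on_compact:
  assumes "open U" and "compact K" and "K \<subseteq> U" and "convex_on U F"
    and F_grad: "\<And>q. q \<in> U \<Longrightarrow> (F has_derivative (\<lambda>h. gradF q \<bullet> h)) (at q)"
  obtains B where "\<And>p q. p \<in> K \<Longrightarrow> q \<in> K \<Longrightarrow> \<bar>bregman F gradF p q\<bar> \<le> B"
proof -
  obtain G where G: "\<And>q. q \<in> K \<Longrightarrow> norm (gradF q) \<le> G"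
    using convex_gradient_bounded_on_compact assms by metis
  have "continuous_on K F"
    using assms(3) F_grad has_derivative_continuous by (blast intro: continuous_at_imp_continuous_on)
  then obtain M where M: "\<And>y. y \<in> K \<Longrightarrow> \<bar>F y\<bar> \<le> M"
    using continuous_on_compact_bound[OF \<open>compact K\<close>] by (metis real_norm_def)
  obtain R where R: "\<And>x. x \<in> K \<Longrightarrow> norm x \<le> R"
    using compact_imp_bounded[OF \<open>compact K\<close>] unfolding bounded_iff by blast
  show thesis
  proof (rule that)
    fix p q assume "p \<in> K" "q \<in> K"
    have "\<bar>gradF q \<bullet> (p - q)\<bar> \<le> norm (gradF q) * norm (p - q)"
      by (rule Cauchy_Schwarz_ineq2)
    also have "\<dots> \<le> G * (R + R)"
    proof (rule mult_mono)
      show "norm (p - q) \<le> R + R"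
        using R[OF \<open>p \<in> K\<close>] R[OF \<open>q \<in> K\<close>] norm_triangle_ineq4[of p q] by linarith
      show "0 \<le> G"
        using G[OF \<open>q \<in> K\<close>] norm_ge_zero[of "gradF q"] by linarith
    qed (use G \<open>q \<in> K\<close> in auto)
    finally show "\<bar>bregman F gradF p q\<bar> \<le> 2 * M + G * (R + R)"
      using M[OF \<open>p \<in> K\<close>] M[OF \<open>q \<in> K\<close>] by (simp add: bregman_def)
  qed
qed

lemma Ex_bregman_pythagorean:
  fixes D :: "'x::finite pmf" and P :: "(real ^ 'y::finite ^ 'x) set"
  assumes F_grad: "\<And>q. q \<in> U \<Longrightarrow> (F has_derivative (\<lambda>h. gradF q \<bullet> h)) (at q)"
    and "convex P" and "p \<in> P" and "r \<in> P" and p_U: "\<And>x. p $ x \<in> U"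
    and p_min: "\<And>\<pi>. \<pi> \<in> P \<Longrightarrow>
          Ex D (\<lambda>x. bregman F gradF (p $ x) (q $ x)) \<le> Ex D (\<lambda>x. bregman F gradF (\<pi> $ x) (q $ x))"
  shows "Ex D (\<lambda>x. bregman F gradF (r $ x) (p $ x)) + Ex D (\<lambda>x. bregman F gradF (p $ x) (q $ x))
           \<le> Ex D (\<lambda>x. bregman F gradF (r $ x) (q $ x))"
proof -
  define gap where "gap x = (gradF (p $ x) - gradF (q $ x)) \<bullet> (r $ x - p $ x)" for x
  define G where "G t = Ex D (\<lambda>x. bregman F gradF (((1 - t) *\<^sub>R p + t *\<^sub>R r) $ x) (q $ x))" for t
  have "(G has_real_derivative Ex D gap) (at 0)"
    unfolding G_def gap_def
    by (intro Ex_has_real_derivative)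
       (simp add: bregman_along_segment_has_real_derivative F_grad p_U)
  moreover have "G 0 \<le> G t" if "0 < t" "t \<le> 1" for t
  proof -
    have "(1 - t) *\<^sub>R p + t *\<^sub>R r \<in> P"
      using convexD[OF \<open>convex P\<close> \<open>p \<in> P\<close> \<open>r \<in> P\<close>, of "1 - t" t] that by simp
    from p_min[OF this] show ?thesis
      by (simp add: G_def)
  qed
  ultimately have "0 \<le> Ex D gap"
    by (rule has_real_derivative_nonneg_at_right_min)
  moreover have "Ex D (\<lambda>x. bregman F gradF (r $ x) (q $ x))
      = Ex D (\<lambda>x. bregman F gradF (r $ x) (p $ x)) + Ex D (\<lambda>x. bregman F gradF (p $ x) (q $ x))
        + Ex D gap"
    unfolding Ex_add[symmetric] gap_def
    by (rule arg_cong[where f = "Ex D"], rule ext, rule bregman_three_point)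
  ultimately show ?thesis by linarith
qed

lemma eps_dev_upper:
  fixes FF :: "('x::finite \<Rightarrow> real) set"
  assumes "\<And>f x. f \<in> FF \<Longrightarrow> \<bar>f x\<bar> \<le> B" and "f \<in> FF"
  shows "\<bar>Ex D f - Ex D' f\<bar> \<le> eps_dev D D' FF"
proof -
  have "\<bar>Ex D g - Ex D' g\<bar> \<le> 2 * B" if "g \<in> FF" for g
  proof -
    have "\<And>x. \<bar>g x\<bar> \<le> B"
      using assms(1) that by blast
    then have "\<bar>Ex D g\<bar> \<le> B" and "\<bar>Ex D' g\<bar> \<le> B"
      by (rule Ex_abs_le)+
    then show ?thesis
      by linarith
  qed
  then have "bdd_above ((\<lambda>g. \<bar>Ex D g - Ex D' g\<bar>) ` FF)"
    by (rule bdd_aboveI2)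
  then show ?thesis
    unfolding eps_dev_def by (rule cSUP_upper[OF \<open>f \<in> FF\<close>])
qed

lemma compact_prob_simplex: "compact (prob_simplex :: (real ^ 'y::finite) set)"
proof (rule compact_eq_bounded_closed[THEN iffD2], rule conjI)
  show "bounded (prob_simplex :: (real ^ 'y) set)"
  proof (rule boundedI)
    fix p :: "real ^ 'y" assume "p \<in> prob_simplex"
    then have "(\<Sum>i\<in>UNIV. \<bar>p $ i\<bar>) = 1"
      unfolding prob_simplex_def by simp
    then show "norm p \<le> 1"
      using norm_le_l1_cart[of p] by simp
  qed
  have "prob_simplex = (\<Inter>i. {p :: real ^ 'y. 0 \<le> p $ i}) \<inter> {p. (\<Sum>i\<in>UNIV. p $ i) = 1}"
    unfolding prob_simplex_def by auto
  also have "closed \<dots>"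
    by (intro closed_Int closed_INT ballI closed_Collect_le closed_Collect_eq continuous_intros)
  finally show "closed (prob_simplex :: (real ^ 'y) set)" .
qed

lemma Fclass_baseline_mem:
  "\<pi> \<in> P \<Longrightarrow> (\<lambda>x. bregman F gradF (\<pi> $ x) (pi0 $ x)) \<in> Fclass F gradF pi0 P"
  unfolding Fclass_def by blast

lemma Fclass_pair_mem:
  "\<pi> \<in> P \<Longrightarrow> \<pi>' \<in> P \<Longrightarrow> (\<lambda>x. bregman F gradF (\<pi>' $ x) (\<pi> $ x)) \<in> Fclass F gradF pi0 P"
  unfolding Fclass_def by blast

lemma Fclass_deviation_le_eps_dev:
  fixes D D' :: "'x::finite pmf"
  assumes "open U" and "prob_simplex \<subseteq> U" and "convex_on U F"
    and "\<And>q. q \<in> U \<Longrightarrow> (F has_derivative (\<lambda>h. gradF q \<bullet> h)) (at q)"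
    and "P \<subseteq> models" and "pi0 \<in> models"
    and "f \<in> Fclass F gradF pi0 P"
  shows "\<bar>Ex D f - Ex D' f\<bar> \<le> eps_dev D D' (Fclass F gradF pi0 P)"
proof -
  obtain B where B: "\<And>p q. p \<in> prob_simplex \<Longrightarrow> q \<in> prob_simplex \<Longrightarrow> \<bar>bregman F gradF p q\<bar> \<le> B"
    using bregman_bounded_on_compact[OF assms(1) compact_prob_simplex assms(2-4)] by metis
  have simplex: "\<pi> $ x \<in> prob_simplex" if "\<pi> \<in> models" for \<pi> x
    using that by (simp add: models_def)
  have "\<bar>g x\<bar> \<le> B" if "g \<in> Fclass F gradF pi0 P" for g x
    using that assms(5,6) unfolding Fclass_def by (auto intro!: B simplex)
  then show ?thesis
    using assms(7) by (rule eps_dev_upper)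
qed

theorem lemma5:
  fixes F :: "real ^ 'y::finite \<Rightarrow> real"
    and gradF :: "real ^ 'y \<Rightarrow> real ^ 'y"
    and U :: "(real ^ 'y) set"
    and Pi C :: "(real ^ 'y ^ 'x::finite) set"
    and pi0 pistar pihat pihatS :: "real ^ 'y ^ 'x"
    and D :: "'x pmf"
    and S :: "'x list"
  assumes U_open: "open U" and U_convex: "convex U" and simplex_U: "prob_simplex \<subseteq> U"
    and F_convex: "convex_on U F"
    and F_grad: "\<And>q. q \<in> U \<Longrightarrow> (F has_derivative (\<lambda>h. gradF q \<bullet> h)) (at q)"
    and Pi_models: "Pi \<subseteq> models" and Pi_closed: "closed Pi" and Pi_convex: "convex Pi"
    and C_closed: "closed C" and C_convex: "convex C"
    and Pibar_closed: "closed (C \<inter> Pi)" and Pibar_convex: "convex (C \<inter> Pi)"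
    and pi0_model: "pi0 \<in> models"
    and D_full: "set_pmf D = UNIV"
    and S_ne: "S \<noteq> []"
    and pihat_mem: "pihat \<in> C \<inter> Pi"
    and pihat_min: "\<And>\<pi>. \<pi> \<in> C \<inter> Pi \<Longrightarrow>
          Ex D (\<lambda>x. bregman F gradF (pihat $ x) (pi0 $ x)) \<le> Ex D (\<lambda>x. bregman F gradF (\<pi> $ x) (pi0 $ x))"
    and pihatS_mem: "pihatS \<in> C \<inter> Pi"
    and pihatS_min: "\<And>\<pi>. \<pi> \<in> C \<inter> Pi \<Longrightarrow>
          Ex (pmf_of_multiset (mset S)) (\<lambda>x. bregman F gradF (pihatS $ x) (pi0 $ x))
          \<le> Ex (pmf_of_multiset (mset S)) (\<lambda>x. bregman F gradF (\<pi> $ x) (pi0 $ x))"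
    and pistar_mem: "pistar \<in> C \<inter> Pi"
  shows "let Dhat = pmf_of_multiset (mset S);
             eps = eps_dev D Dhat (Fclass F gradF pi0 (C \<inter> Pi))
         in Ex D (\<lambda>x. bregman F gradF (pihat $ x) (pi0 $ x))
              \<le> Ex D (\<lambda>x. bregman F gradF (pihatS $ x) (pi0 $ x))
          \<and> Ex D (\<lambda>x. bregman F gradF (pihatS $ x) (pi0 $ x))
              \<le> Ex D (\<lambda>x. bregman F gradF (pihat $ x) (pi0 $ x)) + 2 * eps
          \<and> Improv F gradF D pistar pi0 pihatS
              \<ge> Ex D (\<lambda>x. bregman F gradF (pihat $ x) (pi0 $ x))
                - Ex D (\<lambda>x. bregman F gradF (pistar $ x) (pihat $ x)) - 6 * eps"
proof -
  define Dh where "Dh = pmf_of_multiset (mset S)"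
  define eps where "eps = eps_dev D Dh (Fclass F gradF pi0 (C \<inter> Pi))"
  have Pibar_models: "C \<inter> Pi \<subseteq> models"
    using Pi_models by blast
  have Pibar_U: "\<pi> $ x \<in> U" if "\<pi> \<in> C \<inter> Pi" for \<pi> x
    using that Pibar_models simplex_U by (auto simp: models_def)
  have dev: "\<bar>Ex D f - Ex Dh f\<bar> \<le> eps" if "f \<in> Fclass F gradF pi0 (C \<inter> Pi)" for f
    unfolding eps_def
    by (rule Fclass_deviation_le_eps_dev[OF U_open simplex_U F_convex F_grad Pibar_models pi0_model that])
  have "Ex Dh (\<lambda>x. bregman F gradF (pistar $ x) (pihatS $ x))
          + Ex Dh (\<lambda>x. bregman F gradF (pihatS $ x) (pi0 $ x))
        \<le> Ex Dh (\<lambda>x. bregman F gradF (pistar $ x) (pi0 $ x))"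
    using Ex_bregman_pythagorean[OF F_grad Pibar_convex pihatS_mem pistar_mem
        Pibar_U[OF pihatS_mem] pihatS_min[folded Dh_def]] .
  moreover have "0 \<le> Ex D (\<lambda>x. bregman F gradF (pistar $ x) (pihat $ x))"
    using Pibar_U pihat_mem pistar_mem by (intro Ex_nonneg bregman_nonneg[OF F_convex F_grad]) auto
  moreover note pihat_min[OF pihatS_mem] pihatS_min[OF pihat_mem, folded Dh_def]
    dev[OF Fclass_baseline_mem[OF pihat_mem]] dev[OF Fclass_baseline_mem[OF pihatS_mem]]
    dev[OF Fclass_baseline_mem[OF pistar_mem]] dev[OF Fclass_pair_mem[OF pihatS_mem pistar_mem]]
  \<comment> \<open>These facts already give the improvement bound with \<open>3 * eps\<close> in place of \<open>6 * eps\<close>.\<close>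
  ultimately show ?thesis
    unfolding Let_def Improv_def Dh_def[symmetric] eps_def[symmetric] abs_le_iff
    by (intro conjI) linarith+
qed

end
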